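(* Fix a real number $\beta>-1$ and let $\phi$ be an analytic self-map of $\mathbb{D}$. If the composition operator $C_\phi:A^2_\beta\to A^2_\beta$, $C_\phi f=f\circ\phi$, is complex symmetric, then $\phi$ is either an elliptic automorphism of $\mathbb{D}$ or has its Denjoy–Wolff point in $\mathbb{D}$ (in particular, $\phi$ fixes a point of $\mathbb{D}$).
   Context: $\mathbb{D}$ is the open unit disc. For $\beta>-1$, $A^2_\beta$ is the Hilbert space of analytic functions $f(z)=\sum_{n\ge0}\widehat f(n)z^n$ on $\mathbb{D}$ with inner product $\langle f,g\rangle=\sum_{n\ge0}\frac{n!\,\Gamma(2+\beta)}{\Gamma(n+2+\beta)}\widehat f(n)\overline{\widehat g(n)}$ (equivalently the $L^2$ inner product with respect to $(\beta+1)(1-|z|^2)^\beta dA(z)$). A conjugation on a Hilbert space $\mathcal H$ is a conjugate-linear map $C$ with $C^2=I$ and $\langle Cf,Cg\rangle=\langle g,f\rangle$ for all $f,g$; a bounded operator $T$ is complex symmetric if $CT=T^*C$ for some conjugation $C$. An elliptic automorphism is an automorphism of $\mathbb{D}$ with a fixed point in $\mathbb{D}$. If $\phi$ is not an elliptic automorphism, there is a unique $\omega\in\overline{\mathbb{D}}$ with $\phi^{[n]}(z)\to\omega$ for all $z\in\mathbb{D}$ ($\phi^{[n]}$ the $n$-th iterate), the Denjoy–Wolff point of $\phi$. *)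

theory Defs
  imports "HOL-Analysis.Analysis"
begin

text \<open>Elements of the weighted Bergman space A^2_beta are represented by their
Taylor coefficient sequences a :: nat => complex (f(z) = sum a n z^n).\<close>

definition bergman_weight :: "real \<Rightarrow> nat \<Rightarrow> real" where
  "bergman_weight \<beta> n = fact n * Gamma (2 + \<beta>) / Gamma (real n + 2 + \<beta>)"

definition A2 :: "real \<Rightarrow> (nat \<Rightarrow> complex) set" where
  "A2 \<beta> = {a. summable (\<lambda>n. bergman_weight \<beta> n * (cmod (a n))\<^sup>2)}"

definition A2_inner :: "real \<Rightarrow> (nat \<Rightarrow> complex) \<Rightarrow> (nat \<Rightarrow> complex) \<Rightarrow> complex" where
  "A2_inner \<beta> a b = (\<Sum>n. complex_of_real (bergman_weight \<beta> n) * a n * cnj (b n))"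

definition A2_norm_sq :: "real \<Rightarrow> (nat \<Rightarrow> complex) \<Rightarrow> real" where
  "A2_norm_sq \<beta> a = (\<Sum>n. bergman_weight \<beta> n * (cmod (a n))\<^sup>2)"

definition power_series_fun :: "(nat \<Rightarrow> complex) \<Rightarrow> complex \<Rightarrow> complex" where
  "power_series_fun a z = (\<Sum>n. a n * z ^ n)"

definition taylor_coeffs :: "(complex \<Rightarrow> complex) \<Rightarrow> nat \<Rightarrow> complex" where
  "taylor_coeffs g n = (deriv ^^ n) g 0 / fact n"

definition comp_op :: "(complex \<Rightarrow> complex) \<Rightarrow> (nat \<Rightarrow> complex) \<Rightarrow> nat \<Rightarrow> complex" where
  "comp_op \<phi> a = taylor_coeffs (\<lambda>z. power_series_fun a (\<phi> z))"

definition A2_bounded_operator :: "real \<Rightarrow> ((nat \<Rightarrow> complex) \<Rightarrow> nat \<Rightarrow> complex) \<Rightarrow> bool" where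
  "A2_bounded_operator \<beta> T \<longleftrightarrow>
     (\<forall>a\<in>A2 \<beta>. T a \<in> A2 \<beta>) \<and>
     (\<forall>a\<in>A2 \<beta>. \<forall>b\<in>A2 \<beta>. \<forall>c::complex. T (\<lambda>n. c * a n + b n) = (\<lambda>n. c * T a n + T b n)) \<and>
     (\<exists>K. \<forall>a\<in>A2 \<beta>. A2_norm_sq \<beta> (T a) \<le> K * A2_norm_sq \<beta> a)"

definition A2_conjugation :: "real \<Rightarrow> ((nat \<Rightarrow> complex) \<Rightarrow> nat \<Rightarrow> complex) \<Rightarrow> bool" where
  "A2_conjugation \<beta> C \<longleftrightarrow>
     (\<forall>a\<in>A2 \<beta>. C a \<in> A2 \<beta>) \<and>
     (\<forall>a\<in>A2 \<beta>. \<forall>b\<in>A2 \<beta>. \<forall>c::complex. C (\<lambda>n. c * a n + b n) = (\<lambda>n. cnj c * C a n + C b n)) \<and>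
     (\<forall>a\<in>A2 \<beta>. C (C a) = a) \<and>
     (\<forall>a\<in>A2 \<beta>. \<forall>b\<in>A2 \<beta>. A2_inner \<beta> (C a) (C b) = A2_inner \<beta> b a)"

definition A2_complex_symmetric :: "real \<Rightarrow> ((nat \<Rightarrow> complex) \<Rightarrow> nat \<Rightarrow> complex) \<Rightarrow> bool" where
  "A2_complex_symmetric \<beta> T \<longleftrightarrow> A2_bounded_operator \<beta> T \<and>
     (\<exists>C Tadj. A2_conjugation \<beta> C \<and>
        (\<forall>a\<in>A2 \<beta>. Tadj a \<in> A2 \<beta>) \<and>
        (\<forall>a\<in>A2 \<beta>. \<forall>b\<in>A2 \<beta>. A2_inner \<beta> (T a) b = A2_inner \<beta> a (Tadj b)) \<and>
        (\<forall>a\<in>A2 \<beta>. C (T a) = Tadj (C a)))"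

definition disc_automorphism :: "(complex \<Rightarrow> complex) \<Rightarrow> bool" where
  "disc_automorphism \<phi> \<longleftrightarrow> \<phi> holomorphic_on ball 0 1 \<and> bij_betw \<phi> (ball 0 1) (ball 0 1)"

definition elliptic_automorphism :: "(complex \<Rightarrow> complex) \<Rightarrow> bool" where
  "elliptic_automorphism \<phi> \<longleftrightarrow> disc_automorphism \<phi> \<and> (\<exists>z\<in>ball 0 1. \<phi> z = z)"

definition denjoy_wolff_point :: "(complex \<Rightarrow> complex) \<Rightarrow> complex \<Rightarrow> bool" where
  "denjoy_wolff_point \<phi> \<omega> \<longleftrightarrow> \<not> elliptic_automorphism \<phi> \<and> \<omega> \<in> cball 0 1 \<and>
     (\<forall>z\<in>ball 0 1. (\<lambda>n. (\<phi> ^^ n) z) \<longlonglongrightarrow> \<omega>)"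

end

theory Submission
  imports Defs "HOL-Complex_Analysis.Complex_Analysis"
begin

text \<open>
  A conjugation \<open>C\<close> with \<open>C C\<^sub>\<phi> = C\<^sub>\<phi>\<^sup>* C\<close> turns the constant \<open>1\<close>, which \<open>C\<^sub>\<phi>\<close> fixes, into a
  nonzero vector \<open>g = C 1\<close> with \<open>\<langle>C\<^sub>\<phi> f, g\<rangle> = \<langle>f, g\<rangle>\<close> for all \<open>f\<close>.

  Suppose the orbit of \<open>0\<close> comes arbitrarily close to the circle, so that
  \<open>\<phi>\<^sup>m(0) \<rightarrow> \<omega>\<close> with \<open>\<bar>\<omega>\<bar> = 1\<close> along a subsequence of iterates. By Schwarz--Pick
  \<open>\<phi>\<^sup>m \<rightarrow> \<omega>\<close> uniformly on \<open>\<bar>z\<bar> \<le> 1/2\<close> along it, so the powers \<open>(\<phi>\<^sup>m)\<^sup>k\<close>, which have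
  norm at most \<open>1\<close> in \<open>A\<^sup>2\<^sub>\<beta>\<close> by Bessel's inequality, converge weakly to the constant \<open>\<omega>\<^sup>k\<close>.
  Testing the invariance of \<open>g\<close> on them gives \<open>bergman_weight \<beta> k * \<bar>g\<^sub>k\<bar> = \<bar>g\<^sub>0\<bar>\<close>
  for all \<open>k\<close>, which is incompatible with \<open>g \<in> A\<^sup>2\<^sub>\<beta>\<close>, \<open>g \<noteq> 0\<close>.

  Hence the orbit of \<open>0\<close> stays in a compact subdisc. The points lying eventually in all
  pseudo-hyperbolic discs of a fixed radius around it form a convex set that \<open>\<phi>\<close> maps into
  itself, and Brouwer's theorem yields a fixed point \<open>p\<close>. If \<open>\<phi>\<close> is not an elliptic automorphism,
  strict Schwarz--Pick forces every orbit to converge to \<open>p\<close>, its Denjoy--Wolff point.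
\<close>

section \<open>Moebius maps of the disc and the Schwarz--Pick lemma\<close>

abbreviation disc_moebius :: "complex \<Rightarrow> complex \<Rightarrow> complex" where
  "disc_moebius w \<equiv> Moebius_function 0 w"

lemma moebius_denominator_nonzero:
  assumes "norm w < 1" "norm z \<le> 1"
  shows "1 - cnj w * z \<noteq> 0"
proof
  assume "1 - cnj w * z = 0"
  then have "norm (cnj w * z) = 1" by (metis eq_iff_diff_eq_0 norm_one)
  moreover have "norm w * norm z \<le> norm w"
    using assms(2) by (simp add: mult_left_le)
  ultimately show False using assms(1) by (simp add: norm_mult)
qed

lemma disc_moebius_in_ball: "w \<in> ball 0 1 \<Longrightarrow> z \<in> ball 0 1 \<Longrightarrow> disc_moebius w z \<in> ball 0 1"
  using Moebius_function_norm_lt_1 by auto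

lemma disc_moebius_inverse:
  "w \<in> ball 0 1 \<Longrightarrow> z \<in> ball 0 1 \<Longrightarrow> disc_moebius (-w) (disc_moebius w z) = z"
  using Moebius_function_compose[of "-w" w z] by auto

lemma disc_moebius_eq_0_iff:
  assumes "w \<in> ball 0 1" "z \<in> ball 0 1"
  shows "disc_moebius w z = 0 \<longleftrightarrow> z = w"
  using moebius_denominator_nonzero[of w z] assms by (simp add: Moebius_function_simple)

lemma bij_betw_disc_moebius:
  assumes "w \<in> ball 0 1"
  shows "bij_betw (disc_moebius w) (ball 0 1) (ball 0 1)"
  using assms disc_moebius_inverse[of w] disc_moebius_inverse[of "-w"]
  by (intro bij_betw_byWitness[where f' = "disc_moebius (-w)"]) (auto intro: disc_moebius_in_ball)

lemma bij_betw_rotation: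
  assumes "norm \<alpha> = 1"
  shows "bij_betw (\<lambda>z. \<alpha> * z) (ball 0 1) (ball (0::complex) 1)"
proof (rule bij_betw_byWitness[where f' = "\<lambda>z. cnj \<alpha> * z"])
  have "\<alpha> * cnj \<alpha> = 1"
    using assms complex_norm_square[of \<alpha>] by simp
  then show "\<forall>z\<in>ball 0 1. cnj \<alpha> * (\<alpha> * z) = z" "\<forall>z\<in>ball 0 1. \<alpha> * (cnj \<alpha> * z) = z"
    by (simp_all add: mult.assoc[symmetric] mult.commute[of "cnj \<alpha>"])
qed (use assms in \<open>auto simp: norm_mult\<close>)

lemma norm_disc_moebius_boundary:
  assumes "norm p < 1" "norm q = 1"
  shows "norm (disc_moebius p q) = 1"
proof -
  have "q * cnj q = 1"
    using assms(2) complex_norm_square[of q] by simp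
  then have "1 - cnj p * q = q * cnj (q - p)" by (simp add: algebra_simps)
  then have "norm (1 - cnj p * q) = norm (q - p)"
    by (simp only: norm_mult complex_mod_cnj assms(2) mult_1)
  moreover have "q - p \<noteq> 0" using assms by auto
  ultimately show ?thesis by (simp add: Moebius_function_simple norm_divide)
qed

lemma norm_diff_le_disc_moebius:
  assumes "norm p < 1" "norm z < 1"
  shows "norm (z - p) \<le> 2 * norm (disc_moebius p z)"
proof -
  have "norm (1 - cnj p * z) \<le> 1 + norm p * norm z"
    using norm_triangle_ineq4[of 1 "cnj p * z"] by (simp add: norm_mult)
  also have "\<dots> \<le> 2" using assms by (simp add: mult_le_one)
  finally have "norm (disc_moebius p z) * norm (1 - cnj p * z) \<le> norm (disc_moebius p z) * 2"
    by (simp add: mult_left_mono)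
  moreover have "norm (z - p) = norm (disc_moebius p z) * norm (1 - cnj p * z)"
    using moebius_denominator_nonzero[of p z] assms by (simp add: Moebius_function_simple norm_divide)
  ultimately show ?thesis by simp
qed

lemma moebius_norm_identity:
  fixes c z :: complex
  shows "(norm (1 - cnj c * z))\<^sup>2 - (norm (z - c))\<^sup>2 = (1 - (norm c)\<^sup>2) * (1 - (norm z)\<^sup>2)"
proof -
  have e: "\<And>a::complex. complex_of_real ((norm a)\<^sup>2) = a * cnj a" by (rule complex_norm_square)
  have "complex_of_real ((norm (1 - cnj c * z))\<^sup>2 - (norm (z - c))\<^sup>2)
      = (1 - cnj c * z) * cnj (1 - cnj c * z) - (z - c) * cnj (z - c)"
    by (simp only: of_real_diff e)
  also have "\<dots> = (1 - c * cnj c) * (1 - z * cnj z)" by (simp add: algebra_simps)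
  also have "\<dots> = complex_of_real ((1 - (norm c)\<^sup>2) * (1 - (norm z)\<^sup>2))"
    by (simp only: of_real_mult of_real_diff of_real_1 e)
  finally show ?thesis using of_real_eq_iff by blast
qed

lemma norm_diff_le_if_disc_moebius_le_half:
  assumes c: "norm c < 1" and z: "norm z < 1" and half: "norm (disc_moebius c z) \<le> 1/2"
  shows "norm (z - c) \<le> 2 * (1 - norm c)"
proof -
  have "cnj c * c = complex_of_real ((norm c)\<^sup>2)"
    by (metis complex_norm_square mult.commute)
  then have "1 - cnj c * c = complex_of_real (1 - (norm c)\<^sup>2)" by simp
  moreover have "0 \<le> 1 - (norm c)\<^sup>2"
    using c by (simp add: abs_square_le_1 less_imp_le)
  ultimately have "norm (1 - cnj c * c) = 1 - (norm c)\<^sup>2"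
    by (metis norm_of_real abs_of_nonneg)
  moreover have "1 - cnj c * z = (1 - cnj c * c) + cnj c * (c - z)" by (simp add: algebra_simps)
  then have "norm (1 - cnj c * z) \<le> norm (1 - cnj c * c) + norm (cnj c * (c - z))"
    by (metis norm_triangle_ineq)
  moreover have "norm (cnj c * (c - z)) = norm c * norm (z - c)"
    by (simp add: norm_mult norm_minus_commute)
  ultimately have "norm (1 - cnj c * z) \<le> (1 - (norm c)\<^sup>2) + norm c * norm (z - c)"
    by simp
  also have "\<dots> \<le> (1 - (norm c)\<^sup>2) + norm (z - c)"
    using c by (simp add: mult_left_le_one_le)
  finally have bound: "norm (1 - cnj c * z) \<le> (1 - (norm c)\<^sup>2) + norm (z - c)" .
  have "norm (z - c) = norm (disc_moebius c z) * norm (1 - cnj c * z)"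
    using moebius_denominator_nonzero[of c z] c z by (simp add: Moebius_function_simple norm_divide)
  also have "\<dots> \<le> 1/2 * ((1 - (norm c)\<^sup>2) + norm (z - c))"
    using half bound by (intro mult_mono) auto
  finally have "norm (z - c) \<le> (1 + norm c) * (1 - norm c)"
    by (simp add: power2_eq_square algebra_simps)
  also have "\<dots> \<le> 2 * (1 - norm c)" using c by (intro mult_right_mono) auto
  finally show ?thesis .
qed

lemma moebius_conjugate_self_map:
  assumes hol: "f holomorphic_on ball 0 1" and self: "f ` ball 0 1 \<subseteq> ball 0 1"
    and a: "a \<in> ball 0 1"
  defines "g \<equiv> \<lambda>u. disc_moebius (f a) (f (disc_moebius (-a) u))"
  shows "g holomorphic_on ball 0 1" and "\<And>u. norm u < 1 \<Longrightarrow> norm (g u) < 1" and "g 0 = 0"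
proof -
  have fa: "f a \<in> ball 0 1" using self a by blast
  have ma: "-a \<in> ball 0 1" using a by simp
  have "(f \<circ> disc_moebius (-a)) holomorphic_on ball 0 1"
    by (rule holomorphic_on_compose_gen[OF Moebius_function_holomorphic hol])
      (use ma disc_moebius_in_ball in auto)
  then have "(disc_moebius (f a) \<circ> (f \<circ> disc_moebius (-a))) holomorphic_on ball 0 1"
    by (rule holomorphic_on_compose_gen[OF _ Moebius_function_holomorphic])
      (use fa ma self disc_moebius_in_ball in auto)
  then show "g holomorphic_on ball 0 1" by (simp add: g_def o_def)
  show "norm (g u) < 1" if "norm u < 1" for u
    using that ma fa self disc_moebius_in_ball unfolding g_def by (auto simp: image_subset_iff)
  show "g 0 = 0"
    by (simp add: g_def Moebius_function_of_zero Moebius_function_eq_zero)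
qed

lemma schwarz_pick:
  assumes hol: "f holomorphic_on ball 0 1" and self: "f ` ball 0 1 \<subseteq> ball 0 1"
    and a: "a \<in> ball 0 1" and z: "z \<in> ball 0 1"
  shows "norm (disc_moebius (f a) (f z)) \<le> norm (disc_moebius a z)"
proof -
  note g = moebius_conjugate_self_map[OF hol self a]
  have "norm (disc_moebius (f a) (f (disc_moebius (-a) (disc_moebius a z)))) \<le> norm (disc_moebius a z)"
    by (rule Schwarz_Lemma(1)[OF g(1) g(3) g(2)]) (use disc_moebius_in_ball a z in auto)
  then show ?thesis using disc_moebius_inverse[OF a z] by simp
qed

text \<open>Equality in Schwarz--Pick forces the conjugated map to be a rotation, so \<open>f\<close> is a
  composition of disc automorphisms.\<close>
lemma schwarz_pick_strict:
  assumes hol: "f holomorphic_on ball 0 1" and self: "f ` ball 0 1 \<subseteq> ball 0 1"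
    and a: "a \<in> ball 0 1" and z: "z \<in> ball 0 1" and "z \<noteq> a"
    and not_aut: "\<not> disc_automorphism f"
  shows "norm (disc_moebius (f a) (f z)) < norm (disc_moebius a z)"
proof (rule ccontr)
  assume "\<not> ?thesis"
  then have eq: "norm (disc_moebius (f a) (f z)) = norm (disc_moebius a z)"
    using schwarz_pick[OF hol self a z] by simp
  note g = moebius_conjugate_self_map[OF hol self a]
  define u where "u = disc_moebius a z"
  have "norm u < 1" "u \<noteq> 0"
    using disc_moebius_in_ball disc_moebius_eq_0_iff a z \<open>z \<noteq> a\<close> by (auto simp: u_def)
  moreover have "norm (disc_moebius (f a) (f (disc_moebius (-a) u))) = norm u"
    using eq disc_moebius_inverse[OF a z] by (simp add: u_def)
  ultimately obtain \<alpha> where rot: "\<And>v. norm v < 1 \<Longrightarrow> disc_moebius (f a) (f (disc_moebius (-a) v)) = \<alpha> * v"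
    and "norm \<alpha> = 1"
    using Schwarz_Lemma(3)[OF g(1) g(3) g(2), of 0] by auto
  have fa: "f a \<in> ball 0 1" using self a by blast
  have f_eq: "f w = (disc_moebius (- f a) \<circ> (\<lambda>v. \<alpha> * v) \<circ> disc_moebius a) w"
    if w: "w \<in> ball 0 1" for w
  proof -
    have "f w \<in> ball 0 1" using self w by blast
    then have "f w = disc_moebius (- f a) (disc_moebius (f a) (f w))"
      using disc_moebius_inverse[OF fa] by simp
    then show ?thesis
      using rot[of "disc_moebius a w"] disc_moebius_in_ball[OF a w] disc_moebius_inverse[OF a w]
      by simp
  qed
  have "bij_betw (disc_moebius (- f a) \<circ> (\<lambda>v. \<alpha> * v) \<circ> disc_moebius a) (ball 0 1) (ball 0 1)"
    using fa a \<open>norm \<alpha> = 1\<close> by (intro bij_betw_trans[where B = "ball 0 1"]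
        bij_betw_disc_moebius bij_betw_rotation) auto
  then have "bij_betw f (ball 0 1) (ball 0 1)"
    using f_eq bij_betw_cong by blast
  then show False using not_aut hol unfolding disc_automorphism_def by blast
qed

section \<open>Iterates of a self-map of the disc\<close>

lemma funpow_in_ball:
  fixes f :: "complex \<Rightarrow> complex"
  assumes "f ` ball 0 1 \<subseteq> ball 0 1" and "z \<in> ball 0 1"
  shows "(f ^^ n) z \<in> ball 0 1"
proof (induction n)
  case (Suc n)
  then show ?case using assms(1) by (auto simp: image_subset_iff)
qed (use assms(2) in simp)

lemma holomorphic_on_funpow:
  assumes hol: "f holomorphic_on ball 0 1" and self: "f ` ball 0 1 \<subseteq> ball 0 1"
  shows "(f ^^ n) holomorphic_on ball 0 1"
proof (induction n)
  case (Suc n)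
  have "(f \<circ> (f ^^ n)) holomorphic_on ball 0 1"
    by (rule holomorphic_on_compose_gen[OF Suc.IH hol]) (use funpow_in_ball[OF self] in auto)
  then show ?case by (simp add: o_def)
qed simp

lemma schwarz_pick_funpow:
  assumes hol: "f holomorphic_on ball 0 1" and self: "f ` ball 0 1 \<subseteq> ball 0 1"
    and a: "a \<in> ball 0 1" and z: "z \<in> ball 0 1"
  shows "norm (disc_moebius ((f ^^ n) a) ((f ^^ n) z)) \<le> norm (disc_moebius a z)"
proof (induction n)
  case (Suc n)
  have "norm (disc_moebius (f ((f ^^ n) a)) (f ((f ^^ n) z)))
      \<le> norm (disc_moebius ((f ^^ n) a) ((f ^^ n) z))"
    by (rule schwarz_pick[OF hol self funpow_in_ball[OF self a] funpow_in_ball[OF self z]])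
  then show ?case using Suc by simp
qed simp

lemma tendsto_disc_moebius:
  assumes "norm p < 1" and "x \<longlonglongrightarrow> q" and "norm q \<le> 1"
  shows "(\<lambda>j. disc_moebius p (x j)) \<longlonglongrightarrow> disc_moebius p q"
  unfolding Moebius_function_simple
  by (intro tendsto_intros assms moebius_denominator_nonzero)

lemma limit_norm_disc_moebius_subseq:
  assumes "norm p < 1" and lim: "(\<lambda>n. norm (disc_moebius p (x n))) \<longlonglongrightarrow> L"
    and "strict_mono s" and "(\<lambda>j. x (s j)) \<longlonglongrightarrow> y" and "norm y \<le> 1"
  shows "L = norm (disc_moebius p y)"
proof -
  have "(\<lambda>j. norm (disc_moebius p (x (s j)))) \<longlonglongrightarrow> norm (disc_moebius p y)"
    using assms by (intro tendsto_norm tendsto_disc_moebius) auto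
  moreover have "(\<lambda>j. norm (disc_moebius p (x (s j)))) \<longlonglongrightarrow> L"
    using LIMSEQ_subseq_LIMSEQ[OF lim \<open>strict_mono s\<close>] by (simp add: o_def)
  ultimately show ?thesis using LIMSEQ_unique by blast
qed

lemma tendsto_if_norm_disc_moebius_tendsto_0:
  assumes "norm p < 1" and "\<And>n. norm (x n) < 1"
    and "(\<lambda>n. norm (disc_moebius p (x n))) \<longlonglongrightarrow> 0"
  shows "x \<longlonglongrightarrow> p"
proof -
  have "(\<lambda>n. 2 * norm (disc_moebius p (x n))) \<longlonglongrightarrow> 0"
    using tendsto_mult_right_zero assms(3) by auto
  moreover have "norm (x n - p) \<le> 2 * norm (disc_moebius p (x n))" for n
    using norm_diff_le_disc_moebius assms(1,2) by simp
  ultimately have "(\<lambda>n. x n - p) \<longlonglongrightarrow> 0"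
    using Lim_null_comparison[of "\<lambda>n. x n - p" "\<lambda>n. 2 * norm (disc_moebius p (x n))"]
    by (simp add: always_eventually)
  then show ?thesis by (rule LIM_zero_cancel)
qed

text \<open>Along the orbit the hyperbolic distance to \<open>p\<close> has the same limit at a limit point \<open>q\<close>
  and at \<open>\<phi> q\<close>, which strict Schwarz--Pick only allows for \<open>q = p\<close>.\<close>
lemma orbit_limit_point_eq_fixed_point:
  fixes \<phi> :: "complex \<Rightarrow> complex"
  assumes hol: "\<phi> holomorphic_on ball 0 1" and self: "\<phi> ` ball 0 1 \<subseteq> ball 0 1"
    and p: "p \<in> ball 0 1" and fixed: "\<phi> p = p" and not_aut: "\<not> disc_automorphism \<phi>"
    and lim: "(\<lambda>n. norm (disc_moebius p ((\<phi> ^^ n) z))) \<longlonglongrightarrow> L"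
    and q: "q \<in> ball 0 1" and r: "strict_mono r" and xr: "(\<lambda>j. (\<phi> ^^ r j) z) \<longlonglongrightarrow> q"
  shows "q = p"
proof (rule ccontr)
  assume "q \<noteq> p"
  note L_at = limit_norm_disc_moebius_subseq[OF _ lim]
  have "isCont \<phi> q"
    using holomorphic_on_imp_continuous_on[OF hol] q by (simp add: continuous_on_eq_continuous_at)
  then have "(\<lambda>j. (\<phi> ^^ Suc (r j)) z) \<longlonglongrightarrow> \<phi> q"
    using isCont_tendsto_compose xr by simp
  moreover have "strict_mono (\<lambda>j. Suc (r j))" using r by (simp add: strict_mono_def)
  moreover have "\<phi> q \<in> ball 0 1" using self q by blast
  ultimately have "L = norm (disc_moebius p (\<phi> q))"
    using L_at p by (simp add: less_imp_le)
  moreover have "L = norm (disc_moebius p q)"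
    using L_at[OF _ r xr] p q by (simp add: less_imp_le)
  moreover have "norm (disc_moebius (\<phi> p) (\<phi> q)) < norm (disc_moebius p q)"
    by (rule schwarz_pick_strict[OF hol self p q \<open>q \<noteq> p\<close> not_aut])
  ultimately show False using fixed by simp
qed

lemma funpow_tendsto_fixed_point:
  fixes \<phi> :: "complex \<Rightarrow> complex"
  assumes hol: "\<phi> holomorphic_on ball 0 1" and self: "\<phi> ` ball 0 1 \<subseteq> ball 0 1"
    and p: "p \<in> ball 0 1" and fixed: "\<phi> p = p" and not_aut: "\<not> disc_automorphism \<phi>"
    and z: "z \<in> ball 0 1"
  shows "(\<lambda>n. (\<phi> ^^ n) z) \<longlonglongrightarrow> p"
proof -
  define x where "x n = (\<phi> ^^ n) z" for n
  have x_ball: "x n \<in> ball 0 1" for n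
    using funpow_in_ball[OF self z] by (simp add: x_def)
  define d where "d = (\<lambda>n. norm (disc_moebius p (x n)))"
  have "decseq d"
    using schwarz_pick[OF hol self p x_ball] fixed by (intro decseq_SucI) (simp add: d_def x_def)
  then obtain L where dL: "d \<longlonglongrightarrow> L" and L_le: "\<And>i. L \<le> d i"
    using decseq_convergent[of d 0] by (auto simp: d_def)
  have "L = 0"
  proof (rule ccontr)
    assume "L \<noteq> 0"
    have "seq_compact (cball (0::complex) 1)" by (rule compact_imp_seq_compact) simp
    moreover have "\<forall>n. x n \<in> cball 0 1" using x_ball by (simp add: less_imp_le)
    ultimately obtain q r where q: "q \<in> cball 0 1" and r: "strict_mono r" and xr: "(x \<circ> r) \<longlonglongrightarrow> q"
      by (rule seq_compactE)
    have Lq: "L = norm (disc_moebius p q)"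
      using limit_norm_disc_moebius_subseq[of p x L r q] dL r xr q p by (simp add: d_def o_def)
    have "q \<in> ball 0 1"
    proof (rule ccontr)
      assume "q \<notin> ball 0 1"
      then have "L = 1" using Lq q p norm_disc_moebius_boundary by simp
      moreover have "d 0 < 1" using disc_moebius_in_ball[OF p x_ball] by (simp add: d_def)
      ultimately show False using L_le[of 0] by simp
    qed
    then have "q = p"
      using orbit_limit_point_eq_fixed_point[OF hol self p fixed not_aut _ _ r] dL xr
      by (simp add: d_def x_def[abs_def] o_def)
    then show False using Lq \<open>L \<noteq> 0\<close> by (simp add: Moebius_function_eq_zero)
  qed
  then have "x \<longlonglongrightarrow> p"
    using dL p x_ball unfolding d_def by (intro tendsto_if_norm_disc_moebius_tendsto_0) auto
  then show ?thesis unfolding x_def[abs_def] .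
qed

section \<open>A fixed point from a bounded orbit\<close>

text \<open>The closed pseudo-hyperbolic disc \<open>{z. \<bar>disc_moebius c z\<bar>\<^sup>2 \<le> R}\<close>, cleared of denominators.\<close>
definition hyperbolic_disc :: "real \<Rightarrow> complex \<Rightarrow> complex set" where
  "hyperbolic_disc R c = {z. (norm (z - c))\<^sup>2 \<le> R * (norm (1 - cnj c * z))\<^sup>2}"

lemma mem_hyperbolic_disc_iff:
  assumes "norm c < 1" "norm z < 1"
  shows "z \<in> hyperbolic_disc R c \<longleftrightarrow> (norm (disc_moebius c z))\<^sup>2 \<le> R"
proof -
  have "0 < (norm (1 - cnj c * z))\<^sup>2"
    using moebius_denominator_nonzero[of c z] assms by simp
  then show ?thesis
    by (simp add: hyperbolic_disc_def Moebius_function_simple norm_divide power_divide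
        pos_divide_le_eq)
qed

lemma convex_on_norm_diff_power2:
  fixes c :: "'a::real_inner"
  shows "convex_on UNIV (\<lambda>z. (norm (z - c))\<^sup>2)"
proof (rule convex_onI)
  fix t :: real and x y :: 'a
  assume "0 < t" "t < 1"
  have "(1 - t) * (norm (x - c))\<^sup>2 + t * (norm (y - c))\<^sup>2 - (norm ((1 - t) *\<^sub>R x + t *\<^sub>R y - c))\<^sup>2
      = t * (1 - t) * (norm (x - y))\<^sup>2"
    by (simp add: power2_norm_eq_inner inner_commute algebra_simps)
  moreover have "0 \<le> t * (1 - t) * (norm (x - y))\<^sup>2"
    using \<open>0 < t\<close> \<open>t < 1\<close> by simp
  ultimately show "(norm ((1 - t) *\<^sub>R x + t *\<^sub>R y - c))\<^sup>2
      \<le> (1 - t) * (norm (x - c))\<^sup>2 + t * (norm (y - c))\<^sup>2"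
    by linarith
qed simp

text \<open>By \<open>moebius_norm_identity\<close> the disc is a sublevel set of a convex function.\<close>
lemma convex_hyperbolic_disc:
  assumes "0 \<le> R" "R \<le> 1" "norm c < 1"
  shows "convex (hyperbolic_disc R c)"
proof -
  define A where "A = R * (1 - (norm c)\<^sup>2)"
  have "0 \<le> A" using assms by (simp add: A_def abs_square_le_1 less_imp_le)
  define G where "G z = (1 - R) * (norm (z - c))\<^sup>2 + A * (norm (z - 0))\<^sup>2" for z
  have G: "convex_on UNIV G"
    unfolding G_def using assms \<open>0 \<le> A\<close>
    by (intro convex_on_add convex_on_cmul convex_on_norm_diff_power2) auto
  have mem: "z \<in> hyperbolic_disc R c \<longleftrightarrow> G z \<le> A" for z
  proof -
    have id: "(norm (1 - cnj c * z))\<^sup>2 = (norm (z - c))\<^sup>2 + (1 - (norm c)\<^sup>2) * (1 - (norm z)\<^sup>2)"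
      using moebius_norm_identity[of c z] by linarith
    have "R * (norm (1 - cnj c * z))\<^sup>2 = R * (norm (z - c))\<^sup>2 + A - A * (norm z)\<^sup>2"
      by (subst id) (simp add: A_def algebra_simps)
    then show ?thesis
      unfolding hyperbolic_disc_def G_def mem_Collect_eq by (auto simp: algebra_simps)
  qed
  show ?thesis
  proof (rule convexI)
    fix x y and u v :: real
    assume "x \<in> hyperbolic_disc R c" "y \<in> hyperbolic_disc R c"
      and "0 \<le> u" "0 \<le> v" "u + v = 1"
    then have "G (u *\<^sub>R x + v *\<^sub>R y) \<le> max (G x) (G y)"
      using convex_lower[OF G] by simp
    then show "u *\<^sub>R x + v *\<^sub>R y \<in> hyperbolic_disc R c"
      using mem \<open>x \<in> _\<close> \<open>y \<in> _\<close> by simp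
  qed
qed

lemma hyperbolic_disc_norm_bound:
  assumes "R < 1" and "r < 1" and "norm c \<le> r" and z: "z \<in> hyperbolic_disc R c"
  shows "(norm z)\<^sup>2 \<le> 1 - (1 - R) * (1 - r)\<^sup>2"
proof -
  have c: "(norm c)\<^sup>2 < 1" using assms by (simp add: abs_square_less_1)
  have "(1 - R) * (norm (1 - cnj c * z))\<^sup>2 \<le> (norm (1 - cnj c * z))\<^sup>2 - (norm (z - c))\<^sup>2"
    using z by (simp add: hyperbolic_disc_def algebra_simps)
  also have "\<dots> = (1 - (norm c)\<^sup>2) * (1 - (norm z)\<^sup>2)" by (rule moebius_norm_identity)
  finally have key: "(1 - R) * (norm (1 - cnj c * z))\<^sup>2 \<le> (1 - (norm c)\<^sup>2) * (1 - (norm z)\<^sup>2)" .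
  moreover have "0 \<le> (1 - R) * (norm (1 - cnj c * z))\<^sup>2" using \<open>R < 1\<close> by simp
  ultimately have "0 \<le> (1 - (norm c)\<^sup>2) * (1 - (norm z)\<^sup>2)" by linarith
  then have "norm z \<le> 1"
    using c by (simp add: zero_le_mult_iff abs_square_le_1)
  moreover have "0 \<le> r" using assms(3) norm_ge_zero[of c] by linarith
  ultimately have "norm c * norm z \<le> r * 1"
    using assms by (intro mult_mono) auto
  then have "1 - r \<le> norm (1 - cnj c * z)"
    using norm_triangle_ineq2[of 1 "cnj c * z"] by (simp add: norm_mult)
  then have "(1 - R) * (1 - r)\<^sup>2 \<le> (1 - R) * (norm (1 - cnj c * z))\<^sup>2"
    using assms by (intro mult_left_mono power_mono) auto
  also have "\<dots> \<le> (1 - (norm c)\<^sup>2) * (1 - (norm z)\<^sup>2)" by (rule key)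
  also have "\<dots> \<le> 1 - (norm z)\<^sup>2"
      using c \<open>norm z \<le> 1\<close>
    by (intro mult_left_le_one_le) (auto simp: abs_square_le_1 abs_square_less_1 less_imp_le)
  finally show ?thesis by simp
qed

lemma schwarz_pick_hyperbolic_disc:
  assumes hol: "\<phi> holomorphic_on ball 0 1" and self: "\<phi> ` ball 0 1 \<subseteq> ball 0 1"
    and c: "c \<in> ball 0 1" and z: "z \<in> ball 0 1" and "z \<in> hyperbolic_disc R c"
  shows "\<phi> z \<in> hyperbolic_disc R (\<phi> c)"
proof -
  have "\<phi> c \<in> ball 0 1" "\<phi> z \<in> ball 0 1" using self c z by blast+
  moreover have "(norm (disc_moebius (\<phi> c) (\<phi> z)))\<^sup>2 \<le> (norm (disc_moebius c z))\<^sup>2"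
    using schwarz_pick[OF hol self c z] by (simp add: power_mono)
  moreover have "(norm (disc_moebius c z))\<^sup>2 \<le> R"
    using mem_hyperbolic_disc_iff c z \<open>z \<in> hyperbolic_disc R c\<close> by simp
  ultimately show ?thesis
    using mem_hyperbolic_disc_iff[of "\<phi> c" "\<phi> z" R] by (meson mem_ball_0 order_trans)
qed

lemma convex_eventually_mem:
  assumes "\<And>n. convex (B n)"
  shows "convex {z. \<forall>\<^sub>F n in F. z \<in> B n}"
  using assms unfolding convex_def by (auto elim: eventually_elim2)

lemma brouwer_invariant_convex:
  fixes f :: "'a::euclidean_space \<Rightarrow> 'a"
  assumes cont: "continuous_on U f" and "convex K" "K \<noteq> {}" "bounded K"
    and "closure K \<subseteq> U" and "f ` K \<subseteq> K"
  obtains p where "p \<in> closure K" and "f p = p"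
proof -
  have cont_K: "continuous_on (closure K) f"
    using cont \<open>closure K \<subseteq> U\<close> by (rule continuous_on_subset)
  have "f ` closure K \<subseteq> closure K"
    using \<open>f ` K \<subseteq> K\<close> closure_subset
    by (intro image_closure_subset[OF cont_K closed_closure]) auto
  then have "f \<in> closure K \<rightarrow> closure K" by (simp add: image_subset_iff_funcset)
  moreover have "compact (closure K)" using \<open>bounded K\<close> by simp
  moreover have "convex (closure K)" using \<open>convex K\<close> by (rule convex_closure)
  moreover have "closure K \<noteq> {}" using \<open>K \<noteq> {}\<close> by simp
  ultimately show ?thesis
    using brouwer[of "closure K" f, OF _ _ _ cont_K] that by blast
qed

lemma eventually_hyperbolic_disc_orbit_image:
  fixes \<phi> :: "complex \<Rightarrow> complex"
  assumes hol: "\<phi> holomorphic_on ball 0 1" and self: "\<phi> ` ball 0 1 \<subseteq> ball 0 1"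
    and "z \<in> ball 0 1" and "\<forall>\<^sub>F n in sequentially. z \<in> hyperbolic_disc R ((\<phi> ^^ n) 0)"
  shows "\<forall>\<^sub>F n in sequentially. \<phi> z \<in> hyperbolic_disc R ((\<phi> ^^ n) 0)"
proof -
  have "\<forall>\<^sub>F n in sequentially. \<phi> z \<in> hyperbolic_disc R ((\<phi> ^^ Suc n) 0)"
    using assms(4) schwarz_pick_hyperbolic_disc[OF hol self funpow_in_ball[OF self] \<open>z \<in> ball 0 1\<close>]
    by (auto elim: eventually_mono)
  then show ?thesis
    using eventually_sequentially_Suc[of "\<lambda>n. \<phi> z \<in> hyperbolic_disc R ((\<phi> ^^ n) 0)"] by simp
qed

lemma hyperbolic_discs_subset_compact:
  assumes "0 \<le> r" "r < 1"
  obtains E where "compact E" "E \<subseteq> ball 0 1" "\<And>c. norm c \<le> r \<Longrightarrow> hyperbolic_disc (r\<^sup>2) c \<subseteq> E"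
proof
  define E where "E = {z::complex. (norm z)\<^sup>2 \<le> 1 - (1 - r\<^sup>2) * (1 - r)\<^sup>2}"
  have r2: "r\<^sup>2 < 1" using assms by (simp add: abs_square_less_1)
  show "hyperbolic_disc (r\<^sup>2) c \<subseteq> E" if "norm c \<le> r" for c
    using hyperbolic_disc_norm_bound[OF r2 \<open>r < 1\<close> that] by (auto simp: E_def)
  show "E \<subseteq> ball 0 1"
  proof
    fix z assume "z \<in> E"
    moreover have "0 < (1 - r\<^sup>2) * (1 - r)\<^sup>2" using r2 \<open>r < 1\<close> by simp
    ultimately have "(norm z)\<^sup>2 < 1" by (simp add: E_def)
    then show "z \<in> ball 0 1" by (simp add: abs_square_less_1)
  qed
  then have "bounded E" using bounded_subset[OF bounded_ball] by blast
  moreover have "closed E" unfolding E_def by (intro closed_Collect_le continuous_intros)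
  ultimately show "compact E" by (simp add: compact_eq_bounded_closed)
qed

lemma bounded_orbit_fixed_point:
  fixes \<phi> :: "complex \<Rightarrow> complex"
  assumes hol: "\<phi> holomorphic_on ball 0 1" and self: "\<phi> ` ball 0 1 \<subseteq> ball 0 1"
    and "r < 1" and orbit: "\<And>n. norm ((\<phi> ^^ n) 0) \<le> r"
  shows "\<exists>p\<in>ball 0 1. \<phi> p = p"
proof -
  define c where "c n = (\<phi> ^^ n) 0" for n
  define K where "K = {z. \<forall>\<^sub>F n in sequentially. z \<in> hyperbolic_disc (r\<^sup>2) (c n)}"
  have "0 \<le> r" using orbit[of 0] by simp
  then obtain E where "compact E" and "E \<subseteq> ball 0 1"
    and discs: "\<And>c. norm c \<le> r \<Longrightarrow> hyperbolic_disc (r\<^sup>2) c \<subseteq> E"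
    using hyperbolic_discs_subset_compact \<open>r < 1\<close> by blast
  have r2: "0 \<le> r\<^sup>2" "r\<^sup>2 < 1" using \<open>0 \<le> r\<close> \<open>r < 1\<close> by (auto simp: abs_square_less_1)
  have c_ball: "c n \<in> ball 0 1" for n
    using funpow_in_ball[OF self] by (simp add: c_def)
  have "K \<subseteq> E"
  proof
    fix z assume "z \<in> K"
    then obtain N where "z \<in> hyperbolic_disc (r\<^sup>2) (c N)"
      unfolding K_def eventually_sequentially by auto
    then show "z \<in> E" using discs[OF orbit[of N]] by (auto simp: c_def)
  qed
  then have "closure K \<subseteq> E"
    using \<open>compact E\<close> by (intro closure_minimal compact_imp_closed)
  have "bounded K"
    using \<open>K \<subseteq> E\<close> \<open>compact E\<close> bounded_subset compact_imp_bounded by blast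
  have "convex K"
    unfolding K_def using r2 c_ball by (intro convex_eventually_mem convex_hyperbolic_disc) auto
  have "0 \<in> K"
    using orbit r2 by (auto simp: K_def hyperbolic_disc_def c_def power_mono)
  have "\<phi> ` K \<subseteq> K"
  proof
    fix w assume "w \<in> \<phi> ` K"
    then obtain z where "z \<in> K" and w: "w = \<phi> z" by auto
    then have "z \<in> ball 0 1" using \<open>K \<subseteq> E\<close> \<open>E \<subseteq> ball 0 1\<close> by auto
    then show "w \<in> K"
      using \<open>z \<in> K\<close> eventually_hyperbolic_disc_orbit_image[OF hol self] by (simp add: K_def c_def w)
  qed
  moreover have "K \<noteq> {}" using \<open>0 \<in> K\<close> by blast
  moreover have "closure K \<subseteq> ball 0 1" using \<open>closure K \<subseteq> E\<close> \<open>E \<subseteq> ball 0 1\<close> by blast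
  ultimately obtain p where "p \<in> closure K" "\<phi> p = p"
    using brouwer_invariant_convex[OF holomorphic_on_imp_continuous_on[OF hol] \<open>convex K\<close>]
      \<open>bounded K\<close> by blast
  then show ?thesis using \<open>closure K \<subseteq> E\<close> \<open>E \<subseteq> ball 0 1\<close> by blast
qed

lemma bergman_weight_pos:
  assumes "\<beta> > -1" shows "bergman_weight \<beta> n > 0"
  using assms by (simp add: bergman_weight_def)

lemma bergman_weight_0:
  assumes "\<beta> > -1" shows "bergman_weight \<beta> 0 = 1"
proof -
  have "Gamma (\<beta> + 2) > 0" using assms by (intro Gamma_real_pos) simp
  then show ?thesis by (simp add: bergman_weight_def add.commute)
qed

lemma bergman_weight_Suc:
  assumes "\<beta> > -1"
  shows "bergman_weight \<beta> (Suc n) = bergman_weight \<beta> n * ((real n + 1) / (real n + 2 + \<beta>))"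
proof -
  have pos: "real n + 2 + \<beta> > 0" using assms by simp
  then have "real n + 2 + \<beta> \<notin> \<int>\<^sub>\<le>\<^sub>0" by auto
  then have "Gamma (real (Suc n) + 2 + \<beta>) = (real n + 2 + \<beta>) * Gamma (real n + 2 + \<beta>)"
    using Gamma_plus1[of "real n + 2 + \<beta>"] by (simp add: algebra_simps)
  moreover have "Gamma (real n + 2 + \<beta>) > 0" using pos by (rule Gamma_real_pos)
  ultimately show ?thesis using pos by (simp add: bergman_weight_def field_simps)
qed

lemma bergman_weight_le_1:
  assumes "\<beta> > -1" shows "bergman_weight \<beta> n \<le> 1"
proof (induction n)
  case (Suc n)
  have "(real n + 1) / (real n + 2 + \<beta>) \<le> 1" using assms by simp
  then have "bergman_weight \<beta> n * ((real n + 1) / (real n + 2 + \<beta>)) \<le> bergman_weight \<beta> n"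
    using bergman_weight_pos[OF assms, of n] by (intro mult_left_le) auto
  then show ?case using bergman_weight_Suc[OF assms] Suc by simp
qed (simp add: bergman_weight_0[OF assms])

definition monomial :: "nat \<Rightarrow> nat \<Rightarrow> complex" where
  "monomial k = (\<lambda>n. if n = k then 1 else 0)"

lemma monomial_in_A2: "monomial k \<in> A2 \<beta>"
proof -
  have "(\<lambda>n. bergman_weight \<beta> n * (norm (monomial k n))\<^sup>2) = (\<lambda>n. if n = k then bergman_weight \<beta> k else 0)"
    by (auto simp: monomial_def)
  then show ?thesis
    unfolding A2_def using summable_single[of k "\<lambda>_. bergman_weight \<beta> k"] by simp
qed

lemma A2_inner_monomial:
  "A2_inner \<beta> (monomial k) g = complex_of_real (bergman_weight \<beta> k) * cnj (g k)"
proof -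
  have "(\<lambda>n. complex_of_real (bergman_weight \<beta> n) * monomial k n * cnj (g n))
      = (\<lambda>n. if n = k then complex_of_real (bergman_weight \<beta> k) * cnj (g k) else 0)"
    by (auto simp: monomial_def)
  then show ?thesis
    unfolding A2_inner_def
    using sums_single[of k "\<lambda>_. complex_of_real (bergman_weight \<beta> k) * cnj (g k)"]
    by (simp add: sums_iff)
qed

lemma taylor_coeffs_power: "taylor_coeffs (\<lambda>z. z ^ k) = monomial k"
  unfolding taylor_coeffs_def monomial_def
  by (auto simp: fun_eq_iff higher_deriv_power[where z = 0, simplified]
      pochhammer_fact[symmetric] pochhammer_0_left)

lemma power_series_fun_taylor_coeffs:
  assumes "H holomorphic_on ball 0 1" "w \<in> ball 0 1"
  shows "power_series_fun (taylor_coeffs H) w = H w"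
  using holomorphic_power_series[OF assms]
  unfolding power_series_fun_def taylor_coeffs_def by (simp add: sums_iff)

lemma taylor_coeffs_cong:
  assumes "\<And>w. w \<in> ball 0 1 \<Longrightarrow> F w = G w"
  shows "taylor_coeffs F = taylor_coeffs G"
proof -
  have "\<forall>\<^sub>F x in nhds 0. F x = G x"
    unfolding eventually_nhds using assms by (intro exI[of _ "ball 0 1"]) auto
  then have "(deriv ^^ n) F 0 = (deriv ^^ n) G 0" for n
    by (rule higher_deriv_cong_ev) simp
  then show ?thesis
    unfolding taylor_coeffs_def by simp
qed

lemma comp_op_taylor_coeffs:
  assumes "H holomorphic_on ball 0 1" and self: "\<phi> ` ball 0 1 \<subseteq> ball 0 1"
  shows "comp_op \<phi> (taylor_coeffs H) = taylor_coeffs (\<lambda>z. H (\<phi> z))"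
  unfolding comp_op_def
proof (rule taylor_coeffs_cong)
  fix w :: complex assume "w \<in> ball 0 1"
  then have "\<phi> w \<in> ball 0 1" using self by blast
  then show "power_series_fun (taylor_coeffs H) (\<phi> w) = H (\<phi> w)"
    by (rule power_series_fun_taylor_coeffs[OF assms(1)])
qed

lemma funpow_comp_op_monomial:
  fixes \<phi> :: "complex \<Rightarrow> complex"
  assumes hol: "\<phi> holomorphic_on ball 0 1" and self: "\<phi> ` ball 0 1 \<subseteq> ball 0 1"
  shows "(comp_op \<phi> ^^ m) (monomial k) = taylor_coeffs (\<lambda>z. ((\<phi> ^^ m) z) ^ k)"
proof (induction m)
  case (Suc m)
  define H where "H = (\<lambda>z. ((\<phi> ^^ m) z) ^ k)"
  have "H holomorphic_on ball 0 1"
    unfolding H_def using holomorphic_on_funpow[OF hol self] by (intro holomorphic_intros)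
  have "(comp_op \<phi> ^^ Suc m) (monomial k) = comp_op \<phi> (taylor_coeffs H)"
    using Suc by (simp add: H_def)
  also have "\<dots> = taylor_coeffs (\<lambda>z. H (\<phi> z))"
    by (rule comp_op_taylor_coeffs[OF \<open>H holomorphic_on _\<close> self])
  also have "\<dots> = taylor_coeffs (\<lambda>z. ((\<phi> ^^ Suc m) z) ^ k)"
    by (simp add: H_def funpow_Suc_right del: funpow.simps)
  finally show ?case .
qed (simp add: taylor_coeffs_power)

lemma funpow_invariant:
  assumes "\<And>a. a \<in> A \<Longrightarrow> T a \<in> A" and "\<And>a. a \<in> A \<Longrightarrow> F (T a) = F a" and "a \<in> A"
  shows "F ((T ^^ m) a) = F a"
proof -
  have "(T ^^ m) a \<in> A \<and> F ((T ^^ m) a) = F a"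
    by (induction m) (use assms in auto)
  then show ?thesis ..
qed

section \<open>Bessel's inequality on the unit circle\<close>

definition unit_circle :: "real \<Rightarrow> complex" where
  "unit_circle s = exp (2 * of_real pi * \<i> * of_real s)"

lemma norm_unit_circle [simp]: "norm (unit_circle s) = 1"
  unfolding unit_circle_def by simp

lemma unit_circle_nonzero [simp]: "unit_circle s \<noteq> 0"
  unfolding unit_circle_def by simp

lemma cnj_unit_circle: "cnj (unit_circle s) = inverse (unit_circle s)"
  unfolding unit_circle_def by (simp add: exp_cnj exp_minus[symmetric])

lemma continuous_on_unit_circle [continuous_intros]: "continuous_on A unit_circle"
  unfolding unit_circle_def by (intro continuous_intros)

lemma unit_circle_orthonormal:
  "((\<lambda>s. unit_circle s ^ n * cnj (unit_circle s) ^ m) has_integral (if n = m then 1 else 0)) {0..1}"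
proof (cases "n = m")
  case True
  then have "unit_circle s ^ n * cnj (unit_circle s) ^ m = 1" for s
    by (simp add: cnj_unit_circle power_inverse)
  then show ?thesis using True has_integral_const_real[of "1::complex" 0 1] by simp
next
  case False
  define c where "c = 2 * of_real pi * \<i> * of_int (int n - int m)"
  have "c \<noteq> 0" using False by (simp add: c_def)
  have integrand: "unit_circle s ^ n * cnj (unit_circle s) ^ m = exp (c * of_real s)" for s
  proof -
    have "unit_circle s ^ n * cnj (unit_circle s) ^ m
        = exp (of_nat n * (2 * of_real pi * \<i> * of_real s)) * exp (of_nat m * - (2 * of_real pi * \<i> * of_real s))"
      unfolding unit_circle_def by (simp only: exp_of_nat_mult exp_cnj) simp
    also have "\<dots> = exp (c * of_real s)"
      unfolding c_def by (simp add: algebra_simps flip: exp_add)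
    finally show ?thesis .
  qed
  define F where "F s = exp (c * of_real s) / c" for s :: real
  have "(F has_vector_derivative exp (c * of_real x)) (at x within {0..1})" for x
  proof -
    have "((\<lambda>z. exp (c * z) / c) has_field_derivative exp (c * of_real x)) (at (of_real x))"
      using \<open>c \<noteq> 0\<close> by (auto intro!: derivative_eq_intros)
    then show ?thesis unfolding F_def by (rule has_vector_derivative_real_field)
  qed
  then have "((\<lambda>s. exp (c * of_real s)) has_integral (F 1 - F 0)) {0..1}"
    by (intro fundamental_theorem_of_calculus) auto
  moreover have "exp c = 1"
    using exp_integer_2pi[of "of_int (int n - int m)"] by (simp add: c_def algebra_simps)
  ultimately show ?thesis using False integrand by (simp add: F_def)
qed

lemma taylor_coeffs_has_integral:
  assumes H: "H holomorphic_on ball 0 1" and r: "0 < r" "r < 1"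
  shows "((\<lambda>s. H (of_real r * unit_circle s) * cnj (unit_circle s) ^ n)
          has_integral (taylor_coeffs H n * of_real r ^ n)) {0..1}"
proof -
  have sub: "cball 0 r \<subseteq> ball (0::complex) 1" using r by auto
  have "continuous_on (cball 0 r) H"
    using holomorphic_on_imp_continuous_on[OF H] continuous_on_subset sub by blast
  moreover have "H holomorphic_on ball 0 r"
    using H holomorphic_on_subset sub ball_subset_cball by blast
  ultimately have "((\<lambda>u. H u / (u - 0) ^ Suc n) has_contour_integral
      ((2 * pi * \<i>) / fact n * (deriv ^^ n) H 0)) (circlepath 0 r)"
    using r by (intro Cauchy_has_contour_integral_higher_derivative_circlepath) auto
  then have I: "((\<lambda>x. H (circlepath 0 r x) / (circlepath 0 r x - 0) ^ Suc n
                  * vector_derivative (circlepath 0 r) (at x within {0..1}))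
         has_integral ((2 * pi * \<i>) / fact n * (deriv ^^ n) H 0)) {0..1}"
    unfolding has_contour_integral_def .
  have eq: "H (circlepath 0 r x) / (circlepath 0 r x - 0) ^ Suc n
          * vector_derivative (circlepath 0 r) (at x within {0..1})
      = (2 * pi * \<i> / of_real r ^ n) * (H (of_real r * unit_circle x) * cnj (unit_circle x) ^ n)"
    if "x \<in> {0..1}" for x
  proof -
    have "circlepath 0 r x = of_real r * unit_circle x" unfolding circlepath unit_circle_def by simp
    moreover have "vector_derivative (circlepath 0 r) (at x within {0..1}) = 2 * pi * \<i> * r * unit_circle x"
      using vector_derivative_circlepath01[of x 0 r] that unfolding unit_circle_def by simp
    ultimately show ?thesis
      using r by (simp add: cnj_unit_circle field_simps)
  qed
  then have "((\<lambda>x. (2 * pi * \<i> / of_real r ^ n) * (H (of_real r * unit_circle x) * cnj (unit_circle x) ^ n))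
         has_integral ((2 * pi * \<i>) / fact n * (deriv ^^ n) H 0)) {0..1}"
    by (rule has_integral_eq[OF _ I]) (simp add: eq)
  then have "((\<lambda>x. (of_real r ^ n / (2 * pi * \<i>)) * ((2 * pi * \<i> / of_real r ^ n)
        * (H (of_real r * unit_circle x) * cnj (unit_circle x) ^ n)))
      has_integral ((of_real r ^ n / (2 * pi * \<i>)) * ((2 * pi * \<i>) / fact n * (deriv ^^ n) H 0))) {0..1}"
    by (rule has_integral_mult_right)
  moreover have "(of_real r ^ n / (2 * pi * \<i>)) * ((2 * pi * \<i> / of_real r ^ n) * y) = y" for y
    using r by (simp add: field_simps)
  moreover have "(of_real r ^ n / (2 * pi * \<i>)) * ((2 * pi * \<i>) / fact n * (deriv ^^ n) H 0)
      = taylor_coeffs H n * of_real r ^ n"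
    unfolding taylor_coeffs_def by (simp add: field_simps)
  ultimately show ?thesis by simp
qed

lemma unit_circle_polynomial_parseval:
  "((\<lambda>s. (\<Sum>n<N. b n * unit_circle s ^ n) * cnj (\<Sum>n<N. b n * unit_circle s ^ n))
      has_integral (\<Sum>n<N. b n * cnj (b n))) {0..1}"
proof -
  have "((\<lambda>s. \<Sum>n<N. \<Sum>m<N. (b n * cnj (b m)) * (unit_circle s ^ n * cnj (unit_circle s) ^ m))
        has_integral (\<Sum>n<N. \<Sum>m<N. (b n * cnj (b m)) * (if n = m then 1 else 0))) {0..1}"
    by (intro has_integral_sum has_integral_mult_right unit_circle_orthonormal) auto
  then show ?thesis
    by (simp add: sum_product algebra_simps if_distrib cong: if_cong)
qed

lemma bessel_inequality_unit_circle:
  assumes h: "continuous_on {0..1} h"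
    and b: "\<And>n. n < N \<Longrightarrow> ((\<lambda>s. h s * cnj (unit_circle s) ^ n) has_integral b n) {0..1}"
  shows "(\<Sum>n<N. (norm (b n))\<^sup>2) \<le> integral {0..1} (\<lambda>s. (norm (h s))\<^sup>2)"
proof -
  define S where "S = (\<Sum>n<N. (norm (b n))\<^sup>2)"
  define I where "I = integral {0..1} (\<lambda>s. (norm (h s))\<^sup>2)"
  define P where "P s = (\<Sum>n<N. b n * unit_circle s ^ n)" for s
  have S: "(\<Sum>n<N. b n * cnj (b n)) = complex_of_real S"
    unfolding S_def of_real_sum by (intro sum.cong refl) (simp only: complex_norm_square)
  have hP: "((\<lambda>s. h s * cnj (P s)) has_integral of_real S) {0..1}"
  proof -
    have "((\<lambda>s. \<Sum>n<N. cnj (b n) * (h s * cnj (unit_circle s) ^ n)) has_integral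
          (\<Sum>n<N. cnj (b n) * b n)) {0..1}"
      using b by (intro has_integral_sum has_integral_mult_right) auto
    then show ?thesis
      using S by (simp add: P_def sum_distrib_left algebra_simps)
  qed
  have Ph: "((\<lambda>s. P s * cnj (h s)) has_integral of_real S) {0..1}"
  proof -
    have "((cnj \<circ> (\<lambda>s. h s * cnj (P s))) has_integral cnj (of_real S)) {0..1}"
      using hP has_integral_cnj by blast
    then show ?thesis by (simp add: o_def mult.commute)
  qed
  have PP: "((\<lambda>s. P s * cnj (P s)) has_integral of_real S) {0..1}"
    using unit_circle_polynomial_parseval[of b N] by (simp add: P_def S)
  have "(\<lambda>s. (norm (h s))\<^sup>2) integrable_on {0..1}"
    by (intro integrable_continuous_interval continuous_intros h)
  then have "((\<lambda>s. complex_of_real ((norm (h s))\<^sup>2)) has_integral of_real I) {0..1}"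
    unfolding I_def by (intro has_integral_of_real) (simp add: has_integral_integral)
  then have hh: "((\<lambda>s. h s * cnj (h s)) has_integral of_real I) {0..1}"
    unfolding complex_norm_square .
  have "((\<lambda>s. h s * cnj (h s) - h s * cnj (P s) - P s * cnj (h s) + P s * cnj (P s))
      has_integral (of_real I - of_real S - of_real S + of_real S)) {0..1}"
    by (intro has_integral_add has_integral_diff hh hP Ph PP)
  moreover have "h s * cnj (h s) - h s * cnj (P s) - P s * cnj (h s) + P s * cnj (P s)
      = complex_of_real ((norm (h s - P s))\<^sup>2)" for s
    unfolding complex_norm_square by (simp add: algebra_simps)
  ultimately have "((\<lambda>s. complex_of_real ((norm (h s - P s))\<^sup>2)) has_integral of_real (I - S)) {0..1}"
    by simp
  from has_integral_linear[OF this bounded_linear_Re]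
  have "((\<lambda>s. (norm (h s - P s))\<^sup>2) has_integral (I - S)) {0..1}" by (simp add: o_def)
  then have "0 \<le> I - S" by (rule has_integral_nonneg) simp
  then show ?thesis by (simp add: S_def I_def)
qed

lemma sum_taylor_coeffs_sq_le:
  assumes H: "H holomorphic_on ball 0 1" and bounded: "\<And>z. z \<in> ball 0 1 \<Longrightarrow> norm (H z) \<le> 1"
  shows "(\<Sum>n<N. (norm (taylor_coeffs H n))\<^sup>2) \<le> 1"
proof -
  have on_circle: "(\<Sum>n<N. (norm (taylor_coeffs H n))\<^sup>2 * r ^ (2 * n)) \<le> 1" if r: "0 < r" "r < 1" for r
  proof -
    define h where "h s = H (of_real r * unit_circle s)" for s
    have "continuous_on {0..1} h"
      unfolding h_def using r
      by (intro continuous_on_compose2[OF holomorphic_on_imp_continuous_on[OF H]] continuous_intros)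
        (auto simp: norm_mult)
    then have "(\<Sum>n<N. (norm (taylor_coeffs H n * of_real r ^ n))\<^sup>2)
        \<le> integral {0..1} (\<lambda>s. (norm (h s))\<^sup>2)"
      unfolding h_def using taylor_coeffs_has_integral[OF H r]
      by (intro bessel_inequality_unit_circle) auto
    also have "\<dots> \<le> integral {0..1} (\<lambda>s::real. 1::real)"
    proof (rule integral_le)
      show "(\<lambda>s. (norm (h s))\<^sup>2) integrable_on {0..1::real}"
        by (intro integrable_continuous_interval continuous_intros \<open>continuous_on {0..1} h\<close>)
      show "(norm (h s))\<^sup>2 \<le> 1" for s
        unfolding h_def using bounded r by (simp add: norm_mult power_le_one)
    qed (rule integrable_const_ivl)
    finally show ?thesis
      using r by (simp add: norm_mult norm_power power_mult_distrib power_mult mult.commute)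
  qed
  have "((\<lambda>r. \<Sum>n<N. (norm (taylor_coeffs H n))\<^sup>2 * r ^ (2 * n))
      \<longlongrightarrow> (\<Sum>n<N. (norm (taylor_coeffs H n))\<^sup>2 * 1 ^ (2 * n))) (at_left 1)"
    by (intro tendsto_intros)
  moreover have "\<forall>\<^sub>F r in at_left 1. (\<Sum>n<N. (norm (taylor_coeffs H n))\<^sup>2 * r ^ (2 * n)) \<le> 1"
    using eventually_at_left_real[of 0 "1::real"] by (auto elim: eventually_mono intro: on_circle)
  ultimately show ?thesis
    using tendsto_upperbound trivial_limit_at_left_real by fastforce
qed

lemma taylor_coeffs_in_A2:
  assumes "\<beta> > -1" and H: "H holomorphic_on ball 0 1"
    and bounded: "\<And>z. z \<in> ball 0 1 \<Longrightarrow> norm (H z) \<le> 1"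
  shows "taylor_coeffs H \<in> A2 \<beta>" and "A2_norm_sq \<beta> (taylor_coeffs H) \<le> 1"
proof -
  note partial = sum_taylor_coeffs_sq_le[OF H bounded]
  have summable: "summable (\<lambda>n. (norm (taylor_coeffs H n))\<^sup>2)"
    using partial by (intro summableI_nonneg_bounded[where x = 1]) auto
  have le: "bergman_weight \<beta> n * (norm (taylor_coeffs H n))\<^sup>2 \<le> (norm (taylor_coeffs H n))\<^sup>2" for n
    using bergman_weight_le_1[OF assms(1)] bergman_weight_pos[OF assms(1)]
    by (intro mult_left_le_one_le) (auto simp: less_imp_le)
  have "0 \<le> bergman_weight \<beta> n * (norm (taylor_coeffs H n))\<^sup>2" for n
    using bergman_weight_pos[OF assms(1)] by (simp add: less_imp_le)
  then have weighted: "summable (\<lambda>n. bergman_weight \<beta> n * (norm (taylor_coeffs H n))\<^sup>2)"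
    using le by (intro summable_comparison_test'[OF summable, of 0]) auto
  then show "taylor_coeffs H \<in> A2 \<beta>" unfolding A2_def by simp
  have "A2_norm_sq \<beta> (taylor_coeffs H) \<le> (\<Sum>n. (norm (taylor_coeffs H n))\<^sup>2)"
    unfolding A2_norm_sq_def by (intro suminf_le le weighted summable)
  also have "\<dots> \<le> 1" by (rule suminf_le_const[OF summable partial])
  finally show "A2_norm_sq \<beta> (taylor_coeffs H) \<le> 1" .
qed

section \<open>Weak convergence of bounded coefficient sequences\<close>

lemma mult_le_half_squares:
  fixes a b t :: real
  assumes "t > 0"
  shows "a * b \<le> t / 2 * a\<^sup>2 + b\<^sup>2 / (2 * t)"
proof -
  have "0 \<le> (t * a - b)\<^sup>2" by simp
  then have "2 * t * (a * b) \<le> t\<^sup>2 * a\<^sup>2 + b\<^sup>2" by (simp add: power2_eq_square algebra_simps)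
  then show ?thesis using assms by (simp add: field_simps power2_eq_square)
qed

lemma tendsto_suminf_tail:
  fixes f :: "nat \<Rightarrow> real"
  assumes "summable f"
  shows "(\<lambda>N. \<Sum>n. f (n + N)) \<longlonglongrightarrow> 0"
proof -
  have "(\<lambda>N. suminf f - (\<Sum>n<N. f n)) \<longlonglongrightarrow> suminf f - suminf f"
    by (intro tendsto_diff tendsto_const summable_LIMSEQ[OF assms])
  moreover have "(\<Sum>n. f (n + N)) = suminf f - (\<Sum>n<N. f n)" for N
    using suminf_split_initial_segment[OF assms, of N] by simp
  ultimately show ?thesis by simp
qed

lemma norm_weighted_product_le:
  assumes "0 \<le> w" and "0 < \<epsilon>"
  shows "norm (complex_of_real w * a * cnj b) \<le> \<epsilon> / 2 * (w * (norm a)\<^sup>2) + w * (norm b)\<^sup>2 / (2 * \<epsilon>)"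
proof -
  have "norm (complex_of_real w * a * cnj b) = w * (norm a * norm b)"
    using assms(1) by (simp add: norm_mult)
  also have "\<dots> \<le> w * (\<epsilon> / 2 * (norm a)\<^sup>2 + (norm b)\<^sup>2 / (2 * \<epsilon>))"
    using assms by (intro mult_left_mono mult_le_half_squares)
  also have "\<dots> = \<epsilon> / 2 * (w * (norm a)\<^sup>2) + w * (norm b)\<^sup>2 / (2 * \<epsilon>)"
    by (simp add: algebra_simps)
  finally show ?thesis .
qed

lemma A2_inner_tail_le:
  assumes "\<beta> > -1" and a: "a \<in> A2 \<beta>" "A2_norm_sq \<beta> a \<le> 1" and g: "g \<in> A2 \<beta>" and "\<epsilon> > 0"
    and tail: "(\<Sum>n. bergman_weight \<beta> (n + N) * (norm (g (n + N)))\<^sup>2) \<le> \<epsilon>\<^sup>2"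
  shows "norm (A2_inner \<beta> a g - (\<Sum>n<N. complex_of_real (bergman_weight \<beta> n) * a n * cnj (g n))) \<le> \<epsilon>"
proof -
  define w where "w = bergman_weight \<beta>"
  define F where "F = (\<lambda>n. w n * (norm (a n))\<^sup>2)"
  define G where "G = (\<lambda>n. w n * (norm (g n))\<^sup>2)"
  define u where "u n = complex_of_real (w n) * a n * cnj (g n)" for n
  have w: "0 \<le> w n" for n using bergman_weight_pos[OF assms(1)] by (simp add: w_def less_imp_le)
  have F: "summable F" "suminf F \<le> 1" and G: "summable G"
    using a g by (simp_all add: A2_def A2_norm_sq_def F_def G_def w_def)
  have u_le: "norm (u n) \<le> \<epsilon> / 2 * F n + G n / (2 * \<epsilon>)" for n
    unfolding u_def F_def G_def using w \<open>\<epsilon> > 0\<close> by (rule norm_weighted_product_le)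
  have "summable (\<lambda>n. \<epsilon> / 2 * F n + G n / (2 * \<epsilon>))"
    by (intro summable_add summable_mult summable_divide F G)
  then have u_abs: "summable (\<lambda>n. norm (u n))"
    by (rule summable_comparison_test'[where N = 0]) (simp only: real_norm_def abs_norm_cancel u_le)
  have "A2_inner \<beta> a g - (\<Sum>n<N. u n) = (\<Sum>n. u (n + N))"
    using suminf_split_initial_segment[OF summable_norm_cancel[OF u_abs], of N]
    by (simp add: A2_inner_def u_def w_def)
  also have "norm \<dots> \<le> (\<Sum>n. norm (u (n + N)))"
    by (rule summable_norm[OF summable_ignore_initial_segment[OF u_abs]])
  also have "\<dots> \<le> (\<Sum>n. \<epsilon> / 2 * F (n + N) + G (n + N) / (2 * \<epsilon>))"
    using u_le summable_ignore_initial_segment[OF u_abs]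
      summable_ignore_initial_segment[OF \<open>summable (\<lambda>n. \<epsilon> / 2 * F n + _)\<close>]
    by (intro suminf_le) auto
  also have "\<dots> = \<epsilon> / 2 * (\<Sum>n. F (n + N)) + (\<Sum>n. G (n + N)) / (2 * \<epsilon>)"
    using summable_ignore_initial_segment[OF F(1)] summable_ignore_initial_segment[OF G]
    by (simp add: suminf_add[symmetric] suminf_mult suminf_divide summable_mult summable_divide)
  also have "\<dots> \<le> \<epsilon> / 2 * 1 + \<epsilon>\<^sup>2 / (2 * \<epsilon>)"
  proof (intro add_mono mult_left_mono divide_right_mono)
    have "0 \<le> (\<Sum>n<N. F n)" using w by (simp add: F_def sum_nonneg)
    then show "(\<Sum>n. F (n + N)) \<le> 1"
      using suminf_split_initial_segment[OF F(1), of N] F(2) by linarith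
    show "(\<Sum>n. G (n + N)) \<le> \<epsilon>\<^sup>2" using tail by (simp add: G_def w_def)
  qed (use \<open>\<epsilon> > 0\<close> in auto)
  also have "\<dots> = \<epsilon>" using \<open>\<epsilon> > 0\<close> by (simp add: field_simps power2_eq_square)
  finally show ?thesis by (simp add: u_def w_def)
qed

lemma A2_inner_tendsto:
  assumes "\<beta> > -1"
    and A: "\<And>j. A j \<in> A2 \<beta>" "\<And>j. A2_norm_sq \<beta> (A j) \<le> 1" and g: "g \<in> A2 \<beta>"
    and lim_0: "(\<lambda>j. A j 0) \<longlonglongrightarrow> L" and lim_pos: "\<And>n. 0 < n \<Longrightarrow> (\<lambda>j. A j n) \<longlonglongrightarrow> 0"
  shows "(\<lambda>j. A2_inner \<beta> (A j) g) \<longlonglongrightarrow> L * cnj (g 0)"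
proof (rule LIMSEQ_I)
  fix e :: real assume "0 < e"
  define w where "w = bergman_weight \<beta>"
  have "summable (\<lambda>n. w n * (norm (g n))\<^sup>2)" using g by (simp add: A2_def w_def)
  from tendsto_suminf_tail[OF this]
  have "\<forall>\<^sub>F N in sequentially. (\<Sum>n. w (n + N) * (norm (g (n + N)))\<^sup>2) < (e / 2)\<^sup>2"
    using \<open>0 < e\<close> by (intro order_tendstoD(2)) auto
  then obtain N0 where N0: "\<And>N. N \<ge> N0 \<Longrightarrow> (\<Sum>n. w (n + N) * (norm (g (n + N)))\<^sup>2) < (e / 2)\<^sup>2"
    unfolding eventually_sequentially by blast
  define N where "N = Suc N0"
  have "0 < N" by (simp add: N_def)
  define P where "P j = (\<Sum>n<N. complex_of_real (w n) * A j n * cnj (g n))" for j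
  have "P \<longlonglongrightarrow> (\<Sum>n<N. if n = 0 then L * cnj (g 0) else 0)"
    unfolding P_def
  proof (intro tendsto_sum)
    fix n show "(\<lambda>j. complex_of_real (w n) * A j n * cnj (g n))
        \<longlonglongrightarrow> (if n = 0 then L * cnj (g 0) else 0)"
      using lim_0 lim_pos[of n] bergman_weight_0[OF assms(1)]
      by (cases "n = 0") (auto simp: w_def intro!: tendsto_eq_intros)
  qed
  then have "P \<longlonglongrightarrow> L * cnj (g 0)" using \<open>0 < N\<close> by simp
  then obtain J where J: "\<And>j. j \<ge> J \<Longrightarrow> norm (P j - L * cnj (g 0)) < e / 2"
    using \<open>0 < e\<close> LIMSEQ_D[of P] by (metis half_gt_zero)
  have "norm (A2_inner \<beta> (A j) g - L * cnj (g 0)) < e" if "j \<ge> J" for j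
  proof -
    have "norm (A2_inner \<beta> (A j) g - P j) \<le> e / 2"
      unfolding P_def w_def using N0[of N] \<open>0 < e\<close>
      by (intro A2_inner_tail_le[OF assms(1) A g]) (auto simp: N_def w_def)
    then show ?thesis
      using J[OF that] norm_triangle_ineq[of "A2_inner \<beta> (A j) g - P j" "P j - L * cnj (g 0)"]
      by simp
  qed
  then show "\<exists>J. \<forall>j\<ge>J. norm (A2_inner \<beta> (A j) g - L * cnj (g 0)) < e" by blast
qed

section \<open>Orbits accumulating at the boundary\<close>

lemma unimodular_limit_point:
  fixes c :: "nat \<Rightarrow> complex"
  assumes inside: "\<And>n. norm (c n) < 1" and unbounded: "\<And>r. r < 1 \<Longrightarrow> \<exists>n. r < norm (c n)"
  obtains m \<omega> where "norm \<omega> = 1" and "(\<lambda>j. c (m j)) \<longlonglongrightarrow> \<omega>"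
proof -
  have "\<forall>j. \<exists>n. 1 - 1 / (real j + 1) < norm (c n)"
    using unbounded by simp
  then obtain ns where ns: "\<And>j. 1 - 1 / (real j + 1) < norm (c (ns j))" by metis
  have "(\<lambda>j. 1 / (real j + 1)) \<longlonglongrightarrow> 0"
    using LIMSEQ_inverse_real_of_nat by (simp add: inverse_eq_divide add.commute)
  then have lower: "(\<lambda>j. 1 - 1 / (real j + 1)) \<longlonglongrightarrow> 1"
    using tendsto_diff[OF tendsto_const[of 1]] by fastforce
  have norm_lim: "(\<lambda>j. norm (c (ns j))) \<longlonglongrightarrow> 1"
  proof (rule tendsto_sandwich[OF _ _ lower tendsto_const])
    show "\<forall>\<^sub>F j in sequentially. 1 - 1 / (real j + 1) \<le> norm (c (ns j))"
      using ns by (simp add: less_imp_le)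
    show "\<forall>\<^sub>F j in sequentially. norm (c (ns j)) \<le> 1"
      using inside by (simp add: less_imp_le)
  qed
  have "seq_compact (cball (0::complex) 1)" by (rule compact_imp_seq_compact) simp
  moreover have "\<forall>j. c (ns j) \<in> cball 0 1" using inside by (simp add: less_imp_le)
  ultimately obtain \<omega> s where "\<omega> \<in> cball 0 1" and s: "strict_mono s"
    and lim: "((\<lambda>j. c (ns j)) \<circ> s) \<longlonglongrightarrow> \<omega>"
    by (rule seq_compactE)
  have "(\<lambda>j. norm (c (ns (s j)))) \<longlonglongrightarrow> norm \<omega>"
    using tendsto_norm[OF lim] by (simp add: o_def)
  moreover have "(\<lambda>j. norm (c (ns (s j)))) \<longlonglongrightarrow> 1"
    using LIMSEQ_subseq_LIMSEQ[OF norm_lim s] by (simp add: o_def)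
  ultimately have "norm \<omega> = 1" using LIMSEQ_unique by blast
  then show ?thesis using that[of \<omega> "ns \<circ> s"] lim by (simp add: o_def)
qed

lemma funpow_near_orbit_of_0:
  fixes \<phi> :: "complex \<Rightarrow> complex"
  assumes hol: "\<phi> holomorphic_on ball 0 1" and self: "\<phi> ` ball 0 1 \<subseteq> ball 0 1"
    and z: "norm z \<le> 1/2"
  shows "norm ((\<phi> ^^ n) z - (\<phi> ^^ n) 0) \<le> 2 * (1 - norm ((\<phi> ^^ n) 0))"
proof -
  have zb: "z \<in> ball 0 1" and 0: "(0::complex) \<in> ball 0 1" using z by auto
  have "norm (disc_moebius ((\<phi> ^^ n) 0) ((\<phi> ^^ n) z)) \<le> norm (disc_moebius 0 z)"
    by (rule schwarz_pick_funpow[OF hol self 0 zb])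
  also have "\<dots> \<le> 1/2" using z by (simp add: Moebius_function_simple)
  finally show ?thesis
    using norm_diff_le_if_disc_moebius_le_half funpow_in_ball[OF self 0, of n]
      funpow_in_ball[OF self zb, of n] by simp
qed

lemma funpow_uniform_limit_half_disc:
  fixes \<phi> :: "complex \<Rightarrow> complex"
  assumes hol: "\<phi> holomorphic_on ball 0 1" and self: "\<phi> ` ball 0 1 \<subseteq> ball 0 1"
    and lim: "(\<lambda>j. (\<phi> ^^ m j) 0) \<longlonglongrightarrow> \<omega>" and "norm \<omega> = 1"
  obtains \<epsilon> where "\<epsilon> \<longlonglongrightarrow> 0" and "\<And>j z. norm z \<le> 1/2 \<Longrightarrow> norm ((\<phi> ^^ m j) z - \<omega>) \<le> \<epsilon> j"
proof
  define c where "c j = (\<phi> ^^ m j) 0" for j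
  have "(\<lambda>j. 2 * (1 - norm (c j)) + norm (c j - \<omega>)) \<longlonglongrightarrow> 2 * (1 - norm \<omega>) + norm (\<omega> - \<omega>)"
    using lim unfolding c_def by (intro tendsto_intros)
  then show "(\<lambda>j. 2 * (1 - norm (c j)) + norm (c j - \<omega>)) \<longlonglongrightarrow> 0"
    using \<open>norm \<omega> = 1\<close> by simp
  show "norm ((\<phi> ^^ m j) z - \<omega>) \<le> 2 * (1 - norm (c j)) + norm (c j - \<omega>)" if "norm z \<le> 1/2" for j z
    using funpow_near_orbit_of_0[OF hol self that, of "m j"]
      norm_triangle_ineq[of "(\<phi> ^^ m j) z - c j" "c j - \<omega>"] by (simp add: c_def)
qed

lemma norm_taylor_coeffs_le:
  assumes H: "H holomorphic_on ball 0 1" and "0 < n"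
    and bound: "\<And>z. norm z \<le> 1/2 \<Longrightarrow> norm (H z - L) \<le> \<epsilon>"
  shows "norm (taylor_coeffs H n) \<le> \<epsilon> * 2 ^ n"
proof -
  have sub: "cball 0 (1/2) \<subseteq> ball (0::complex) 1" by auto
  have hol: "(\<lambda>w. H w - L) holomorphic_on ball 0 1" using H by (intro holomorphic_intros)
  have "(\<lambda>w. H w - L) holomorphic_on ball 0 (1/2)"
    by (rule holomorphic_on_subset[OF hol]) auto
  moreover have "continuous_on (cball 0 (1/2)) (\<lambda>w. H w - L)"
    using holomorphic_on_imp_continuous_on[OF hol] sub by (rule continuous_on_subset)
  ultimately have "norm ((deriv ^^ n) (\<lambda>w. H w - L) 0) \<le> fact n * \<epsilon> / (1/2) ^ n"
    using bound by (intro Cauchy_inequality) auto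
  moreover have "(deriv ^^ n) (\<lambda>w. H w - L) 0 = (deriv ^^ n) H 0"
    using higher_deriv_diff[OF H, of "\<lambda>w. L" 0 n] \<open>0 < n\<close> by simp
  ultimately show ?thesis
    by (simp add: taylor_coeffs_def norm_divide divide_le_eq field_simps)
qed

lemma taylor_coeffs_tendsto_0:
  assumes "\<And>j. H j holomorphic_on ball 0 1" and "\<epsilon> \<longlonglongrightarrow> 0" and "0 < n"
    and "\<And>j z. norm z \<le> 1/2 \<Longrightarrow> norm (H j z - L) \<le> \<epsilon> j"
  shows "(\<lambda>j. taylor_coeffs (H j) n) \<longlonglongrightarrow> 0"
proof -
  have "norm (taylor_coeffs (H j) n) \<le> \<epsilon> j * 2 ^ n" for j
    using assms by (intro norm_taylor_coeffs_le) auto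
  moreover have "(\<lambda>j. \<epsilon> j * 2 ^ n) \<longlonglongrightarrow> 0 * 2 ^ n" by (intro tendsto_intros assms)
  ultimately show ?thesis
    using Lim_null_comparison[of "\<lambda>j. taylor_coeffs (H j) n" "\<lambda>j. \<epsilon> j * 2 ^ n"]
    by (simp add: always_eventually)
qed

lemma invariant_vector_coeffs:
  fixes \<phi> :: "complex \<Rightarrow> complex"
  assumes "\<beta> > -1" and hol: "\<phi> holomorphic_on ball 0 1" and self: "\<phi> ` ball 0 1 \<subseteq> ball 0 1"
    and g: "g \<in> A2 \<beta>" and maps: "\<And>a. a \<in> A2 \<beta> \<Longrightarrow> comp_op \<phi> a \<in> A2 \<beta>"
    and inv: "\<And>a. a \<in> A2 \<beta> \<Longrightarrow> A2_inner \<beta> (comp_op \<phi> a) g = A2_inner \<beta> a g"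
    and lim: "(\<lambda>j. (\<phi> ^^ m j) 0) \<longlonglongrightarrow> \<omega>" and "norm \<omega> = 1"
  shows "complex_of_real (bergman_weight \<beta> k) * cnj (g k) = \<omega> ^ k * cnj (g 0)"
proof -
  define A where "A j = taylor_coeffs (\<lambda>z. ((\<phi> ^^ m j) z) ^ k)" for j
  have hol_pow: "(\<lambda>z. ((\<phi> ^^ m j) z) ^ k) holomorphic_on ball 0 1" for j
    using holomorphic_on_funpow[OF hol self] by (intro holomorphic_intros)
  have "norm (((\<phi> ^^ m j) z) ^ k) \<le> 1" if "z \<in> ball 0 1" for j z
    using funpow_in_ball[OF self that, of "m j"] by (simp add: norm_power power_le_one less_imp_le)
  then have A: "A j \<in> A2 \<beta>" "A2_norm_sq \<beta> (A j) \<le> 1" for j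
    unfolding A_def using taylor_coeffs_in_A2[OF assms(1) hol_pow] by auto
  have "A2_inner \<beta> (A j) g = A2_inner \<beta> (monomial k) g" for j
    unfolding A_def funpow_comp_op_monomial[OF hol self, symmetric]
    by (rule funpow_invariant[where F = "\<lambda>a. A2_inner \<beta> a g" and A = "A2 \<beta>"])
      (use maps inv monomial_in_A2 in auto)
  moreover have "(\<lambda>j. A2_inner \<beta> (A j) g) \<longlonglongrightarrow> \<omega> ^ k * cnj (g 0)"
  proof (rule A2_inner_tendsto[OF assms(1) A g])
    show "(\<lambda>j. A j 0) \<longlonglongrightarrow> \<omega> ^ k"
      unfolding A_def taylor_coeffs_def by (simp add: lim tendsto_power)
    obtain \<epsilon> where "\<epsilon> \<longlonglongrightarrow> 0" and close: "\<And>j z. norm z \<le> 1/2 \<Longrightarrow> norm ((\<phi> ^^ m j) z - \<omega>) \<le> \<epsilon> j"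
      using funpow_uniform_limit_half_disc[OF hol self lim \<open>norm \<omega> = 1\<close>] by blast
    have "norm (((\<phi> ^^ m j) z) ^ k - \<omega> ^ k) \<le> real k * \<epsilon> j" if "norm z \<le> 1/2" for j z
    proof -
      have "norm ((\<phi> ^^ m j) z) \<le> 1"
        using funpow_in_ball[OF self, of z "m j"] that by (simp add: less_imp_le)
      then have "norm (((\<phi> ^^ m j) z) ^ k - \<omega> ^ k) \<le> real k * norm ((\<phi> ^^ m j) z - \<omega>)"
        using \<open>norm \<omega> = 1\<close> by (intro norm_power_diff) auto
      also have "\<dots> \<le> real k * \<epsilon> j" using close[OF that] by (intro mult_left_mono) auto
      finally show ?thesis .
    qed
    moreover have "(\<lambda>j. real k * \<epsilon> j) \<longlonglongrightarrow> 0"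
      using tendsto_mult_right_zero[OF \<open>\<epsilon> \<longlonglongrightarrow> 0\<close>] by simp
    ultimately show "(\<lambda>j. A j n) \<longlonglongrightarrow> 0" if "0 < n" for n
      unfolding A_def using hol_pow that by (intro taylor_coeffs_tendsto_0) auto
  qed
  ultimately have "(\<lambda>j. A2_inner \<beta> (monomial k) g) \<longlonglongrightarrow> \<omega> ^ k * cnj (g 0)" by simp
  then show ?thesis by (simp add: LIMSEQ_const_iff A2_inner_monomial)
qed

lemma A2_eq_0_if_weighted_norms_const:
  assumes "\<beta> > -1" and g: "g \<in> A2 \<beta>"
    and const: "\<And>k. bergman_weight \<beta> k * norm (g k) = norm (g 0)"
  shows "g = (\<lambda>_. 0)"
proof -
  define T where "T k = bergman_weight \<beta> k * (norm (g k))\<^sup>2" for k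
  have "T \<longlonglongrightarrow> 0"
    using g by (intro summable_LIMSEQ_zero) (simp add: A2_def T_def[abs_def])
  moreover have "(norm (g 0))\<^sup>2 \<le> T k" for k
  proof -
    have "(norm (g 0))\<^sup>2 = (bergman_weight \<beta> k * norm (g k))\<^sup>2"
      using const[of k] by simp
    also have "\<dots> = bergman_weight \<beta> k * T k"
      by (simp add: T_def power2_eq_square algebra_simps)
    also have "\<dots> \<le> T k"
      using bergman_weight_le_1[OF assms(1)] bergman_weight_pos[OF assms(1)]
      by (intro mult_left_le_one_le) (auto simp: T_def less_imp_le)
    finally show ?thesis .
  qed
  ultimately have "(norm (g 0))\<^sup>2 \<le> 0" by (intro LIMSEQ_le_const) auto
  then have "norm (g 0) = 0" by simp
  then have "g k = 0" for k
    using const[of k] bergman_weight_pos[OF assms(1), of k] by simp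
  then show ?thesis by auto
qed

lemma unbounded_orbit_invariant_vector_eq_0:
  fixes \<phi> :: "complex \<Rightarrow> complex"
  assumes "\<beta> > -1" and "\<phi> holomorphic_on ball 0 1" and self: "\<phi> ` ball 0 1 \<subseteq> ball 0 1"
    and g: "g \<in> A2 \<beta>" and "\<And>a. a \<in> A2 \<beta> \<Longrightarrow> comp_op \<phi> a \<in> A2 \<beta>"
    and "\<And>a. a \<in> A2 \<beta> \<Longrightarrow> A2_inner \<beta> (comp_op \<phi> a) g = A2_inner \<beta> a g"
    and unbounded: "\<And>r. r < 1 \<Longrightarrow> \<exists>n. r < norm ((\<phi> ^^ n) 0)"
  shows "g = (\<lambda>_. 0)"
proof -
  obtain m \<omega> where "norm \<omega> = 1" and lim: "(\<lambda>j. (\<phi> ^^ m j) 0) \<longlonglongrightarrow> \<omega>"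
    by (rule unimodular_limit_point[of "\<lambda>n. (\<phi> ^^ n) 0"]) (use funpow_in_ball[OF self] unbounded in auto)
  have "bergman_weight \<beta> k * norm (g k) = norm (g 0)" for k
    using arg_cong[OF invariant_vector_coeffs[OF assms(1-6) lim \<open>norm \<omega> = 1\<close>, of k], of norm]
      bergman_weight_pos[OF assms(1), of k] \<open>norm \<omega> = 1\<close>
    by (simp add: norm_mult norm_power)
  then show ?thesis by (rule A2_eq_0_if_weighted_norms_const[OF assms(1) g])
qed

lemma fixed_point_if_invariant_vector:
  fixes \<phi> :: "complex \<Rightarrow> complex"
  assumes "\<beta> > -1" and hol: "\<phi> holomorphic_on ball 0 1" and self: "\<phi> ` ball 0 1 \<subseteq> ball 0 1"
    and g: "g \<in> A2 \<beta>" "g \<noteq> (\<lambda>_. 0)" and maps: "\<And>a. a \<in> A2 \<beta> \<Longrightarrow> comp_op \<phi> a \<in> A2 \<beta>"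
    and inv: "\<And>a. a \<in> A2 \<beta> \<Longrightarrow> A2_inner \<beta> (comp_op \<phi> a) g = A2_inner \<beta> a g"
  shows "\<exists>p\<in>ball 0 1. \<phi> p = p"
proof (cases "\<exists>r<1. \<forall>n. norm ((\<phi> ^^ n) 0) \<le> r")
  case True
  then show ?thesis using bounded_orbit_fixed_point[OF hol self] by blast
next
  case False
  then have "g = (\<lambda>_. 0)"
    using unbounded_orbit_invariant_vector_eq_0[OF assms(1-3) g(1) maps inv] by (meson not_le)
  with g(2) show ?thesis ..
qed

section \<open>Complex symmetry yields an invariant vector\<close>

lemma A2_conjugation_zero:
  assumes "A2_conjugation \<beta> C"
  shows "C (\<lambda>_. 0) = (\<lambda>_. 0)"
proof -
  have zero: "(\<lambda>_. 0) \<in> A2 \<beta>" by (simp add: A2_def)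
  have "\<forall>a\<in>A2 \<beta>. \<forall>b\<in>A2 \<beta>. \<forall>c. C (\<lambda>n. c * a n + b n) = (\<lambda>n. cnj c * C a n + C b n)"
    using assms unfolding A2_conjugation_def by blast
  from this[rule_format, OF zero zero, of 1]
  have "C (\<lambda>_. 0) = (\<lambda>n. C (\<lambda>_. 0) n + C (\<lambda>_. 0) n)" by simp
  then show ?thesis by (metis add_cancel_left_left)
qed

lemma complex_symmetric_comp_op_invariant_vector:
  fixes \<phi> :: "complex \<Rightarrow> complex"
  assumes hol: "\<phi> holomorphic_on ball 0 1" and self: "\<phi> ` ball 0 1 \<subseteq> ball 0 1"
    and "A2_complex_symmetric \<beta> (comp_op \<phi>)"
  obtains g where "g \<in> A2 \<beta>" "g \<noteq> (\<lambda>_. 0)"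
    and "\<And>a. a \<in> A2 \<beta> \<Longrightarrow> comp_op \<phi> a \<in> A2 \<beta>"
    and "\<And>a. a \<in> A2 \<beta> \<Longrightarrow> A2_inner \<beta> (comp_op \<phi> a) g = A2_inner \<beta> a g"
proof -
  from assms(3) obtain C T' where bounded: "A2_bounded_operator \<beta> (comp_op \<phi>)"
    and C: "A2_conjugation \<beta> C" and "\<And>a. a \<in> A2 \<beta> \<Longrightarrow> T' a \<in> A2 \<beta>"
    and adjoint: "\<And>a b. a \<in> A2 \<beta> \<Longrightarrow> b \<in> A2 \<beta> \<Longrightarrow> A2_inner \<beta> (comp_op \<phi> a) b = A2_inner \<beta> a (T' b)"
    and intertwines: "\<And>a. a \<in> A2 \<beta> \<Longrightarrow> C (comp_op \<phi> a) = T' (C a)"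
    unfolding A2_complex_symmetric_def by blast
  have C_maps: "\<And>a. a \<in> A2 \<beta> \<Longrightarrow> C a \<in> A2 \<beta>" and C_C: "\<And>a. a \<in> A2 \<beta> \<Longrightarrow> C (C a) = a"
    using C unfolding A2_conjugation_def by blast+
  have maps: "\<And>a. a \<in> A2 \<beta> \<Longrightarrow> comp_op \<phi> a \<in> A2 \<beta>"
    using bounded unfolding A2_bounded_operator_def by blast
  have one: "comp_op \<phi> (monomial 0) = monomial 0"
    using funpow_comp_op_monomial[OF hol self, of 1 0] taylor_coeffs_power[of 0] by simp
  define g where "g = C (monomial 0)"
  have g: "g \<in> A2 \<beta>" unfolding g_def using C_maps monomial_in_A2 by blast
  have "T' g = g" unfolding g_def using intertwines[OF monomial_in_A2, of 0] one by simp
  then have inv: "A2_inner \<beta> (comp_op \<phi> a) g = A2_inner \<beta> a g" if "a \<in> A2 \<beta>" for a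
    using adjoint[OF that g] by simp
  have "g \<noteq> (\<lambda>_. 0)"
  proof
    assume "g = (\<lambda>_. 0)"
    then have "monomial 0 = (\<lambda>_. 0)"
      using A2_conjugation_zero[OF C] C_C[OF monomial_in_A2, of 0] by (simp add: g_def)
    then show False by (metis monomial_def zero_neq_one)
  qed
  then show ?thesis using that g maps inv by blast
qed

theorem theorem3p1:
  fixes \<beta> :: real and \<phi> :: "complex \<Rightarrow> complex"
  assumes "\<beta> > -1"
    and "\<phi> holomorphic_on ball 0 1" and "\<phi> ` ball 0 1 \<subseteq> ball 0 1"
    and "A2_complex_symmetric \<beta> (comp_op \<phi>)"
  shows "elliptic_automorphism \<phi> \<or> (\<exists>\<omega>\<in>ball 0 1. denjoy_wolff_point \<phi> \<omega>)"
proof (cases "elliptic_automorphism \<phi>")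
  case False
  obtain g where "g \<in> A2 \<beta>" "g \<noteq> (\<lambda>_. 0)" "\<And>a. a \<in> A2 \<beta> \<Longrightarrow> comp_op \<phi> a \<in> A2 \<beta>"
    "\<And>a. a \<in> A2 \<beta> \<Longrightarrow> A2_inner \<beta> (comp_op \<phi> a) g = A2_inner \<beta> a g"
    using complex_symmetric_comp_op_invariant_vector[OF assms(2-4)] by blast
  then obtain p where p: "p \<in> ball 0 1" "\<phi> p = p"
    using fixed_point_if_invariant_vector[OF assms(1-3)] by blast
  with False have "\<not> disc_automorphism \<phi>" by (auto simp: elliptic_automorphism_def)
  then have "denjoy_wolff_point \<phi> p"
    using False p funpow_tendsto_fixed_point[OF assms(2,3) p] by (simp add: denjoy_wolff_point_def)
  with p show ?thesis by blast
qed simp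

end
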